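(* Let $a<b$ be real numbers and let $g:[a,b)\to\mathbb{R}$ be a continuous function that is differentiable on $(a,b)$ and has a (finite) right-hand derivative at the point $a$. For every $x\in(a,b)$ let $\xi(x)$ be the supremum of the numbers $\tau\in(a,x]$ such that $g'(\tau)\cdot(x-a)=g(x)-g(a)$. Then $$\varlimsup_{x\to a}\frac{\xi(x)-a}{x-a}\ \geq\ \frac1e.$$
   Context: Limits at $a$ are right-hand limits. *)

theory Defs
  imports "HOL-Analysis.Analysis"
begin

definition xi_point :: "(real \<Rightarrow> real) \<Rightarrow> real \<Rightarrow> real \<Rightarrow> real" where
  "xi_point g a x = Sup {\<tau> \<in> {a<..x}. deriv g \<tau> * (x - a) = g x - g a}"

end

theory Submission
  imports Defs
begin

text \<open>If the limsup were below 1/e, there would be c < 1/e such that for every x close to a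
  no mean-value point lies in [a + c(x - a), x]. Then the secant slope (g x - g a) / (x - a)
  has nonvanishing derivative and is strictly monotone, and so is g minus the secant line over
  [a + c(x - a), x]: every chord of g inside that interval is steeper (in the orientation of the
  secant slope) than the secant over [a, x]. Sampling the secant slopes q k along x k = r^k x 0,
  with r = 1 - 1/n and r^(n+1) > c, gives q (i + n) - r q (i + n + 1) > (1 - r) q i, while q k tends
  to the right derivative at a. No strictly decreasing null sequence satisfies this delayed
  recurrence, because the potential e (i + n) - (1 - r) (e i + ... + e (i + n)) would decrease to 0
  and yet be negative at i = 0. The constant 1/e is the limit of (1 - 1/n)^(n+1).\<close>

lemma DERIV_nonzero_imp_inj_on:
  fixes f :: "real \<Rightarrow> real"
  assumes "convex I"
    and deriv: "\<And>x. x \<in> I \<Longrightarrow> (f has_real_derivative f' x) (at x)"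
    and nonzero: "\<And>x. x \<in> I \<Longrightarrow> f' x \<noteq> 0"
  shows "inj_on f I"
proof (rule linorder_inj_onI')
  fix p q assume pq: "p \<in> I" "q \<in> I" "p < q"
  have sub: "{p..q} \<subseteq> I"
    using connected_contains_Icc[OF convex_connected[OF \<open>convex I\<close>] pq(1,2)] .
  show "f p \<noteq> f q"
  proof
    assume "f p = f q"
    moreover have "continuous_on {p..q} f"
      using sub by (intro continuous_at_imp_continuous_on ballI DERIV_isCont[OF deriv]) auto
    moreover have "f differentiable (at x)" if "p < x" "x < q" for x
    proof -
      have "x \<in> I" using that sub by auto
      then show ?thesis using deriv unfolding real_differentiable_def by blast
    qed
    ultimately obtain z where z: "p < z" "z < q" and "DERIV f z :> 0"
      using Rolle[OF \<open>p < q\<close>] by blast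
    moreover have "z \<in> I"
      using z sub by auto
    ultimately show False
      using DERIV_unique[OF deriv] nonzero by blast
  qed
qed

lemma continuous_inj_on_imp_strict_mono_on:
  fixes f :: "real \<Rightarrow> real"
  assumes "convex I" and cont: "continuous_on I f" and inj: "inj_on f I"
    and pq: "p \<in> I" "q \<in> I" "p < q" "f p < f q"
  shows "strict_mono_on I f"
proof (rule strict_mono_onI)
  fix s t assume st: "s \<in> I" "t \<in> I" "s < t"
  define x where "x \<theta> = (1 - \<theta>) * p + \<theta> * s" for \<theta> :: real
  define y where "y \<theta> = (1 - \<theta>) * q + \<theta> * t" for \<theta> :: real
  have xI: "x \<theta> \<in> I" and yI: "y \<theta> \<in> I" if "\<theta> \<in> {0..1}" for \<theta>
    using convexD[OF \<open>convex I\<close> pq(1) st(1), of "1 - \<theta>" \<theta>]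
      convexD[OF \<open>convex I\<close> pq(2) st(2), of "1 - \<theta>" \<theta>] that
    by (simp_all add: x_def y_def)
  have xy: "x \<theta> < y \<theta>" if "\<theta> \<in> {0..1}" for \<theta>
  proof -
    have "0 < (1 - \<theta>) * (q - p) + \<theta> * (t - s)"
    proof (cases "\<theta> = 1")
      case False
      then show ?thesis using that pq st by (intro add_pos_nonneg mult_pos_pos) auto
    qed (use st in simp)
    moreover have "y \<theta> - x \<theta> = (1 - \<theta>) * (q - p) + \<theta> * (t - s)"
      by (simp add: x_def y_def algebra_simps)
    ultimately show ?thesis by linarith
  qed
  \<comment> \<open>Slide the pair (p, q) continuously to (s, t); the sign of the increment of f cannot change.\<close>
  define F where "F \<theta> = f (y \<theta>) - f (x \<theta>)" for \<theta>
  have "continuous_on {0..1} x" "continuous_on {0..1} y"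
    unfolding x_def y_def by (intro continuous_intros)+
  then have "continuous_on {0..1} F"
    unfolding F_def using xI yI by (intro continuous_on_diff continuous_on_compose2[OF cont]) auto
  show "f s < f t"
  proof (rule ccontr)
    assume "\<not> f s < f t"
    then have "F 1 \<le> 0" "0 \<le> F 0"
      using pq by (auto simp: F_def x_def y_def)
    then obtain \<theta> where \<theta>: "\<theta> \<in> {0..1}" and "F \<theta> = 0"
      using IVT2'[of F 1 0 0, OF _ _ _ \<open>continuous_on {0..1} F\<close>] by auto
    then have "y \<theta> = x \<theta>"
      using inj_onD[OF inj _ yI[OF \<theta>] xI[OF \<theta>]] by (simp add: F_def)
    with xy[OF \<theta>] show False by simp
  qed
qed

lemma DERIV_nonzero_imp_strict_mono_on:
  fixes f :: "real \<Rightarrow> real"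
  assumes "convex I"
    and deriv: "\<And>x. x \<in> I \<Longrightarrow> (f has_real_derivative f' x) (at x)"
    and "\<And>x. x \<in> I \<Longrightarrow> f' x \<noteq> 0"
    and "p \<in> I" "q \<in> I" "p < q" "f p < f q"
  shows "strict_mono_on I f"
proof (rule continuous_inj_on_imp_strict_mono_on)
  show "continuous_on I f"
    by (intro continuous_at_imp_continuous_on ballI DERIV_isCont[OF deriv])
  show "inj_on f I"
    using assms(1-3) by (rule DERIV_nonzero_imp_inj_on)
qed (fact assms)+

lemma secant_slope_strict_mono_on:
  fixes g g' :: "real \<Rightarrow> real"
  assumes "a < \<beta>"
    and deriv: "\<And>x. a < x \<Longrightarrow> x < \<beta> \<Longrightarrow> (g has_real_derivative g' x) (at x)"
    and not_mean_value: "\<And>x. a < x \<Longrightarrow> x < \<beta> \<Longrightarrow> g' x * (x - a) \<noteq> g x - g a"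
  obtains \<sigma> :: real where "\<bar>\<sigma>\<bar> = 1"
    and "strict_mono_on {a<..<\<beta>} (\<lambda>x. \<sigma> * ((g x - g a) / (x - a)))"
proof -
  define \<phi> where "\<phi> x = (g x - g a) / (x - a)" for x
  define \<phi>' where "\<phi>' x = (g' x * (x - a) - (g x - g a)) / (x - a)\<^sup>2" for x
  have d\<phi>: "(\<phi> has_real_derivative \<phi>' x) (at x)" if "x \<in> {a<..<\<beta>}" for x
    unfolding \<phi>_def \<phi>'_def using that
    by (auto intro!: derivative_eq_intros deriv simp: power2_eq_square)
  have \<phi>'_nonzero: "\<phi>' x \<noteq> 0" if "x \<in> {a<..<\<beta>}" for x
    using that not_mean_value by (simp add: \<phi>'_def)
  define p where "p = (2 * a + \<beta>) / 3"
  define q where "q = (a + 2 * \<beta>) / 3"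
  have pq: "p \<in> {a<..<\<beta>}" "q \<in> {a<..<\<beta>}" "p < q"
    using \<open>a < \<beta>\<close> by (auto simp: p_def q_def)
  have "inj_on \<phi> {a<..<\<beta>}"
    using convex_real_interval(8) d\<phi> \<phi>'_nonzero by (rule DERIV_nonzero_imp_inj_on)
  then have "\<phi> p \<noteq> \<phi> q"
    using pq by (auto dest: inj_onD)
  define \<sigma> where "\<sigma> = sgn (\<phi> q - \<phi> p)"
  have "\<bar>\<sigma>\<bar> = 1"
    using \<open>\<phi> p \<noteq> \<phi> q\<close> by (simp add: \<sigma>_def abs_sgn_eq)
  moreover have "strict_mono_on {a<..<\<beta>} (\<lambda>x. \<sigma> * \<phi> x)"
  proof (rule DERIV_nonzero_imp_strict_mono_on[OF convex_real_interval(8) DERIV_cmult[OF d\<phi>] _ pq])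
    show "\<sigma> * \<phi>' x \<noteq> 0" if "x \<in> {a<..<\<beta>}" for x
      using \<open>\<bar>\<sigma>\<bar> = 1\<close> \<phi>'_nonzero[OF that] by auto
    show "\<sigma> * \<phi> p < \<sigma> * \<phi> q"
      using \<open>\<phi> p \<noteq> \<phi> q\<close> by (auto simp: \<sigma>_def sgn_if)
  qed
  ultimately show thesis
    using that unfolding \<phi>_def by blast
qed

lemma chord_steeper_than_secant:
  fixes g g' :: "real \<Rightarrow> real"
  assumes "a < u" "u < x"
    and deriv: "\<And>\<tau>. u \<le> \<tau> \<Longrightarrow> \<tau> \<le> x \<Longrightarrow> (g has_real_derivative g' \<tau>) (at \<tau>)"
    and not_mean_value: "\<And>\<tau>. u \<le> \<tau> \<Longrightarrow> \<tau> \<le> x \<Longrightarrow> g' \<tau> * (x - a) \<noteq> g x - g a"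
    and slopes: "\<sigma> * ((g u - g a) / (u - a)) < \<sigma> * ((g x - g a) / (x - a))"
    and st: "u \<le> s" "s < t" "t \<le> x"
  shows "\<sigma> * ((g x - g a) / (x - a)) * (t - s) < \<sigma> * (g t - g s)"
proof -
  define m where "m = (g x - g a) / (x - a)"
  define G where "G \<tau> = \<sigma> * (g \<tau> - g a) - \<sigma> * m * (\<tau> - a)" for \<tau>
  have dG: "(G has_real_derivative \<sigma> * (g' \<tau> - m)) (at \<tau>)" if "\<tau> \<in> {u..x}" for \<tau>
    unfolding G_def using that
    by (auto intro!: derivative_eq_intros deriv simp: algebra_simps)
  have "\<sigma> \<noteq> 0"
    using slopes by auto
  moreover have "g' \<tau> \<noteq> m" if "\<tau> \<in> {u..x}" for \<tau>
  proof
    assume "g' \<tau> = m"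
    then have "g' \<tau> * (x - a) = g x - g a"
      using \<open>a < u\<close> \<open>u < x\<close> by (simp add: m_def)
    with not_mean_value that show False by auto
  qed
  ultimately have G'_nonzero: "\<sigma> * (g' \<tau> - m) \<noteq> 0" if "\<tau> \<in> {u..x}" for \<tau>
    using that by simp
  have "G u = \<sigma> * ((g u - g a) / (u - a)) * (u - a) - \<sigma> * m * (u - a)"
    using \<open>a < u\<close> by (simp add: G_def)
  also have "\<dots> = (u - a) * (\<sigma> * ((g u - g a) / (u - a)) - \<sigma> * m)"
    by (simp add: algebra_simps)
  also have "\<dots> < 0"
    using slopes \<open>a < u\<close> by (simp add: m_def mult_pos_neg)
  also have "0 = G x"
    using \<open>a < u\<close> \<open>u < x\<close> by (simp add: G_def m_def)
  finally have "strict_mono_on {u..x} G"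
    using \<open>u < x\<close> by (intro DERIV_nonzero_imp_strict_mono_on[OF _ dG G'_nonzero]) auto
  then have "G s < G t"
    using st by (auto intro: strict_mono_onD)
  then have "\<sigma> * m * (t - s) < \<sigma> * (g t - g s)"
    by (simp add: G_def algebra_simps)
  then show ?thesis
    by (simp add: m_def)
qed

lemma one_minus_inverse_power_Suc_tendsto:
  "(\<lambda>n. (1 - 1 / real n) ^ Suc n) \<longlonglongrightarrow> exp (-1)"
proof -
  have "(\<lambda>n. (1 - 1 / real n) * (1 + (-1) / real n) ^ n) \<longlonglongrightarrow> (1 - 0) * exp (-1)"
    by (intro tendsto_intros tendsto_exp_limit_sequentially lim_inverse_n')
  then show ?thesis
    by simp
qed

lemma null_sequence_violates_delayed_recurrence:
  fixes e :: "nat \<Rightarrow> real"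
  assumes null: "e \<longlonglongrightarrow> 0" and decr: "\<And>k. e (Suc k) < e k"
    and weight: "1 < (real n + 1) * (1 - r)"
    and recurrence: "\<And>i. (1 - r) * e i < e (i + n) - r * e (Suc (i + n))"
  shows False
proof -
  have "decseq e"
    using decr by (intro decseq_SucI less_imp_le)
  have e_pos: "0 < e k" for k
    using decseq_ge[OF \<open>decseq e\<close> null, of "Suc k"] decr[of k] by simp
  \<comment> \<open>The recurrence says exactly that this potential is strictly decreasing.\<close>
  define S where "S i = (\<Sum>t\<le>n. e (i + t))" for i
  have S_Suc: "S (Suc i) = S i + e (Suc (i + n)) - e i" for i
    using sum.atMost_Suc_shift[of "\<lambda>t. e (i + t)" n] sum.atMost_Suc[of "\<lambda>t. e (i + t)" n]
    by (simp add: S_def)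
  define \<Psi> where "\<Psi> i = e (i + n) - (1 - r) * S i" for i
  have Psi_Suc: "\<Psi> (Suc i) - \<Psi> i = (1 - r) * e i - (e (i + n) - r * e (Suc (i + n)))" for i
    unfolding \<Psi>_def S_Suc by (simp add: algebra_simps)
  have "\<Psi> (Suc i) < \<Psi> i" for i
    using Psi_Suc[of i] recurrence[of i] by linarith
  then have "decseq \<Psi>"
    by (intro decseq_SucI less_imp_le)
  moreover have "\<Psi> \<longlonglongrightarrow> 0 - (1 - r) * (\<Sum>t\<le>n. 0)"
    unfolding \<Psi>_def S_def by (intro tendsto_intros LIMSEQ_ignore_initial_segment null)
  ultimately have "0 \<le> \<Psi> 0"
    using decseq_ge by fastforce
  moreover have "\<Psi> 0 < 0"
  proof -
    have "(real n + 1) * e n \<le> (\<Sum>t\<le>n. e t)"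
      using sum_mono[of "{..n}" "\<lambda>_. e n" e] decseqD[OF \<open>decseq e\<close>] by (simp add: add.commute)
    moreover have "0 < 1 - r"
      using weight zero_less_mult_pos[of "real n + 1" "1 - r"] by simp
    ultimately have "(1 - r) * ((real n + 1) * e n) \<le> (1 - r) * (\<Sum>t\<le>n. e t)"
      by (simp add: mult_left_mono)
    moreover have "e n < (1 - r) * ((real n + 1) * e n)"
      using mult_strict_right_mono[OF weight e_pos[of n]] by (simp add: ac_simps)
    ultimately show ?thesis
      by (simp add: \<Psi>_def S_def)
  qed
  ultimately show False
    by simp
qed

lemma chords_not_all_steeper_than_secant:
  fixes h :: "real \<Rightarrow> real"
  assumes "c < exp (-1)" "0 < \<delta>"
    and slope_limit: "((\<lambda>t. h t / t) \<longlongrightarrow> D) (at_right 0)"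
    and steeper: "\<And>x s t. 0 < x \<Longrightarrow> x < \<delta> \<Longrightarrow> c * x \<le> s \<Longrightarrow> s < t \<Longrightarrow> t \<le> x \<Longrightarrow>
      h x / x * (t - s) < h t - h s"
  shows False
proof -
  have "eventually (\<lambda>n. c < (1 - 1 / real n) ^ Suc n \<and> 2 \<le> n) sequentially"
    using order_tendstoD(1)[OF one_minus_inverse_power_Suc_tendsto \<open>c < exp (-1)\<close>]
    by (intro eventually_conj eventually_ge_at_top)
  then obtain n where n: "c < (1 - 1 / real n) ^ Suc n" "2 \<le> n"
    unfolding eventually_sequentially by blast
  define r where "r = 1 - 1 / real n"
  have r: "0 < r" "r < 1"
    using n by (auto simp: r_def)
  define y where "y k = r ^ k * (\<delta> / 2)" for k
  define q where "q k = h (y k) / y k" for k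
  have y_pos: "0 < y k" and y_less: "y k < \<delta>" for k
    using r \<open>0 < \<delta>\<close> power_le_one[of r k] by (auto simp: y_def)
  have y_Suc: "y (Suc k) = r * y k" for k
    by (simp add: y_def)
  have h_y: "h (y k) = y k * q k" for k
    using y_pos[of k] by (simp add: q_def)
  have "y \<longlonglongrightarrow> 0"
    unfolding y_def using r by (intro tendsto_mult_left_zero LIMSEQ_power_zero) auto
  moreover have "\<forall>\<^sub>F k in sequentially. y k \<in> {0<..} \<and> y k \<noteq> 0"
    using y_pos by (simp add: order_less_imp_not_eq2)
  ultimately have "filterlim y (at_right 0) sequentially"
    by (simp add: filterlim_at)
  then have "q \<longlonglongrightarrow> D"
    unfolding q_def using filterlim_compose[OF slope_limit] by blast
  have step: "(1 - r) * q i < q j - r * q (Suc j)" if "i \<le> j" "j \<le> i + n" for i j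
  proof -
    have "c * y i \<le> r ^ Suc n * y i"
      using n y_pos[of i] by (simp add: r_def)
    also have "\<dots> \<le> r ^ (Suc j - i) * y i"
      using that r y_pos[of i] by (intro mult_right_mono power_decreasing) auto
    also have "\<dots> = y (Suc j)"
      using that by (simp add: y_def mult.assoc flip: power_add)
    finally have "c * y i \<le> y (Suc j)" .
    moreover have "y (Suc j) < y j"
      using r y_pos[of j] by (simp add: y_Suc)
    moreover have "y j \<le> y i"
      using that r \<open>0 < \<delta>\<close> by (simp add: y_def power_decreasing)
    ultimately have "q i * (y j - y (Suc j)) < h (y j) - h (y (Suc j))"
      using steeper[of "y i"] y_pos y_less by (simp add: q_def)
    then have "y j * ((1 - r) * q i) < y j * (q j - r * q (Suc j))"
      unfolding h_y by (simp add: y_Suc algebra_simps)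
    then show ?thesis
      using y_pos[of j] by simp
  qed
  show False
  proof (rule null_sequence_violates_delayed_recurrence[of "\<lambda>k. q k - D" n r])
    show "(\<lambda>k. q k - D) \<longlonglongrightarrow> 0"
      using tendsto_diff[OF \<open>q \<longlonglongrightarrow> D\<close> tendsto_const[of D]] by simp
    show "q (Suc k) - D < q k - D" for k
    proof -
      have "r * q (Suc k) < r * q k"
        using step[of k k] by (simp add: algebra_simps)
      then show ?thesis
        using r by simp
    qed
    show "1 < (real n + 1) * (1 - r)"
      using n by (simp add: r_def field_simps)
    show "(1 - r) * (q i - D) < q (i + n) - D - r * (q (Suc (i + n)) - D)" for i
      using step[of i "i + n"] by (simp add: algebra_simps)
  qed
qed

lemma right_derivative_imp_difference_quotient_tendsto:
  fixes g :: "real \<Rightarrow> real"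
  assumes "(g has_real_derivative D) (at_right a)"
  shows "((\<lambda>t. (g (a + t) - g a) / t) \<longlongrightarrow> D) (at_right 0)"
proof -
  have "((\<lambda>y. (g y - g a) / (y - a)) \<longlongrightarrow> D) (at_right a)"
    using assms by (simp add: has_field_derivative_iff)
  then show ?thesis
    unfolding at_right_to_0[of a] filterlim_filtermap by (simp add: add.commute)
qed

lemma exists_late_mean_value_point:
  fixes g g' :: "real \<Rightarrow> real"
  assumes "a < \<beta>" "0 < c" "c < exp (-1)"
    and deriv: "\<And>x. a < x \<Longrightarrow> x < \<beta> \<Longrightarrow> (g has_real_derivative g' x) (at x)"
    and deriv_right: "(g has_real_derivative D) (at_right a)"
  shows "\<exists>x \<tau>. a < x \<and> x < \<beta> \<and> a + c * (x - a) \<le> \<tau> \<and> \<tau> \<le> x \<and> g' \<tau> * (x - a) = g x - g a"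
proof (rule ccontr)
  assume "\<not> ?thesis"
  then have not_mean_value: "g' \<tau> * (x - a) \<noteq> g x - g a"
    if "a < x" "x < \<beta>" "a + c * (x - a) \<le> \<tau>" "\<tau> \<le> x" for x \<tau>
    using that by blast
  have "c < 1"
    using \<open>c < exp (-1)\<close> exp_less_one_iff[of "-1"] by linarith
  have "a + c * (x - a) \<le> x" if "a < x" for x
  proof -
    have "c * (x - a) \<le> 1 * (x - a)"
      using that \<open>c < 1\<close> by (intro mult_right_mono) auto
    then show ?thesis
      by simp
  qed
  then obtain \<sigma> :: real where mono: "strict_mono_on {a<..<\<beta>} (\<lambda>x. \<sigma> * ((g x - g a) / (x - a)))"
    using secant_slope_strict_mono_on[OF \<open>a < \<beta>\<close> deriv] not_mean_value by blast
  define h where "h t = \<sigma> * (g (a + t) - g a)" for t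
  show False
  proof (rule chords_not_all_steeper_than_secant[of c "\<beta> - a" h "\<sigma> * D"])
    have "((\<lambda>t. \<sigma> * ((g (a + t) - g a) / t)) \<longlongrightarrow> \<sigma> * D) (at_right 0)"
      using deriv_right by (intro tendsto_mult_left right_derivative_imp_difference_quotient_tendsto)
    then show "((\<lambda>t. h t / t) \<longlongrightarrow> \<sigma> * D) (at_right 0)"
      by (simp add: h_def)
  next
    fix x s t assume x: "0 < x" "x < \<beta> - a" and st: "c * x \<le> s" "s < t" "t \<le> x"
    have "\<sigma> * ((g (a + x) - g a) / (a + x - a)) * (a + t - (a + s)) < \<sigma> * (g (a + t) - g (a + s))"
    proof (rule chord_steeper_than_secant[where u = "a + c * x"])
      have "c * x < 1 * x"
        using x \<open>c < 1\<close> by (intro mult_strict_right_mono)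
      then show u: "a < a + c * x" "a + c * x < a + x"
        using x \<open>0 < c\<close> by auto
      show "\<sigma> * ((g (a + c * x) - g a) / (a + c * x - a)) < \<sigma> * ((g (a + x) - g a) / (a + x - a))"
      proof (rule strict_mono_onD[OF mono])
        show "a + c * x \<in> {a<..<\<beta>}" "a + x \<in> {a<..<\<beta>}"
          unfolding greaterThanLessThan_iff using u x by (intro conjI; linarith)+
      qed (fact u)
      show "(g has_real_derivative g' \<tau>) (at \<tau>)" if "a + c * x \<le> \<tau>" "\<tau> \<le> a + x" for \<tau>
        using that u x by (intro deriv) linarith+
      show "g' \<tau> * (a + x - a) \<noteq> g (a + x) - g a" if "a + c * x \<le> \<tau>" "\<tau> \<le> a + x" for \<tau>
        using that x by (intro not_mean_value) auto
    qed (use st in auto)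
    then show "h x / x * (t - s) < h t - h s"
      using x by (simp add: h_def algebra_simps)
  qed (use assms in auto)
qed

lemma has_field_derivative_at_within_Ico_at_right:
  fixes f :: "real \<Rightarrow> real"
  assumes "(f has_field_derivative D) (at a within {a..<b})" "a < b"
  shows "(f has_field_derivative D) (at_right a)"
proof -
  have "(f has_field_derivative D) (at a within {a..(a + b) / 2})"
    using assms(1) by (rule has_field_derivative_subset) (use \<open>a < b\<close> in auto)
  then show ?thesis
    using \<open>a < b\<close> by (simp add: at_within_Icc_at_right)
qed

lemma xi_point_upper:
  assumes "a < \<tau>" "\<tau> \<le> x" "deriv g \<tau> * (x - a) = g x - g a"
  shows "\<tau> \<le> xi_point g a x"
  unfolding xi_point_def using assms by (intro cSup_upper bdd_aboveI[of _ x]) auto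

theorem corollary1:
  fixes g :: "real \<Rightarrow> real" and a b :: real
  assumes "a < b"
    and "continuous_on {a..<b} g"
    and "\<forall>x\<in>{a<..<b}. g differentiable (at x)"
    and "\<exists>D. (g has_real_derivative D) (at a within {a..<b})"
  shows "Limsup (at_right a) (\<lambda>x. ereal ((xi_point g a x - a) / (x - a))) \<ge> ereal (1 / exp 1)"
proof (rule ccontr)
  assume "\<not> ?thesis"
  then have "Limsup (at_right a) (\<lambda>x. ereal ((xi_point g a x - a) / (x - a))) < ereal (exp (-1))"
    by (simp add: exp_minus inverse_eq_divide not_le)
  then obtain c' where c': "Limsup (at_right a) (\<lambda>x. ereal ((xi_point g a x - a) / (x - a))) < ereal c'"
    "ereal c' < ereal (exp (-1))"
    using ereal_dense2 by blast
  define c where "c = max c' (exp (-1) / 2)"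
  have c: "0 < c" "c < exp (-1)"
    using c'(2) by (auto simp: c_def less_max_iff_disj)
  have "\<forall>\<^sub>F x in at_right a. (xi_point g a x - a) / (x - a) < c"
    using Limsup_lessD[OF c'(1)] by (auto simp: c_def elim: eventually_mono)
  then obtain \<beta>' where "a < \<beta>'" and xi_early: "\<And>x. a < x \<Longrightarrow> x < \<beta>' \<Longrightarrow> xi_point g a x - a < c * (x - a)"
    unfolding eventually_at_right_field by (auto simp: divide_less_eq)
  define \<beta> where "\<beta> = min \<beta>' b"
  obtain D where "(g has_real_derivative D) (at a within {a..<b})"
    using assms(4) by blast
  then have deriv_right: "(g has_real_derivative D) (at_right a)"
    using \<open>a < b\<close> by (rule has_field_derivative_at_within_Ico_at_right)
  have deriv: "(g has_real_derivative deriv g x) (at x)" if "a < x" "x < \<beta>" for x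
    using assms(3) that by (simp add: \<beta>_def DERIV_deriv_iff_real_differentiable)
  have "a < \<beta>"
    using \<open>a < \<beta>'\<close> \<open>a < b\<close> by (simp add: \<beta>_def)
  then obtain x \<tau> where "a < x" "x < \<beta>" "a + c * (x - a) \<le> \<tau>" "\<tau> \<le> x"
    and "deriv g \<tau> * (x - a) = g x - g a"
    using exists_late_mean_value_point[OF _ c deriv deriv_right] by blast
  moreover have "a < \<tau>"
    using \<open>a < x\<close> \<open>a + c * (x - a) \<le> \<tau>\<close> mult_pos_pos[of c "x - a"] c by linarith
  ultimately show False
    using xi_point_upper[of a \<tau> x g] xi_early[of x] by (simp add: \<beta>_def)
qed

end
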